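(* Let $n=4k+2$ for some integer $k\geq 0$, and let $v\in\mathbb{Z}^n$. If $v$ is contained in an $n$-icube in $\mathbb{Z}^n$, then $|v|^2=v^Tv\in\mathbb{Z}$ is a sum of two squares of integers.
   Context: For $1\leq k\leq n$, a matrix $(v_1|\dotsc|v_k)\in\mathbb{Z}^{n\times k}$ is a $k$-icube in $\mathbb{Z}^n$ of norm $\lambda>0$ if $v_i^Tv_j=\lambda$ for $i=j$ and $v_i^Tv_j=0$ for $i\neq j$. A vector $v$ is "contained in" an $n$-icube if it is one of the columns of some $n$-icube. *)

theory Defs
  imports Main
begin

text \<open>Vectors in Z^n are represented as functions nat => int, of which only the
  coordinates 0..n-1 matter. The inner product over Z^n:\<close>
definition ip :: "nat \<Rightarrow> (nat \<Rightarrow> int) \<Rightarrow> (nat \<Rightarrow> int) \<Rightarrow> int" where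
  "ip n v w = (\<Sum>i<n. v i * w i)"

definition is_icube :: "nat \<Rightarrow> nat \<Rightarrow> int \<Rightarrow> (nat \<Rightarrow> nat \<Rightarrow> int) \<Rightarrow> bool" where
  "is_icube n k lam V \<longleftrightarrow> 1 \<le> k \<and> k \<le> n \<and> lam > 0 \<and>
     (\<forall>i<k. \<forall>j<k. ip n (V i) (V j) = (if i = j then lam else 0))"

definition in_icube :: "nat \<Rightarrow> (nat \<Rightarrow> int) \<Rightarrow> bool" where
  "in_icube n v \<longleftrightarrow> (\<exists>lam V j. is_icube n n lam V \<and> j < n \<and> (\<forall>i<n. V j i = v i))"

end

theory Submission
  imports Defs Complex_Main "HOL-Computational_Algebra.Primes"
begin

text \<open>Let \<open>lam\<close> be the norm of the icube. Over \<open>\<rat>\<close>, Lagrange's theorem writes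
  \<open>lam = a\<^sup>2 + b\<^sup>2 + c\<^sup>2 + d\<^sup>2\<close>, and \<open>k\<close> diagonal copies of the \<open>4 \<times> 4\<close> matrix of
  multiplication by the quaternion \<open>a + bi + cj + dk\<close> give \<open>4k\<close> orthogonal vectors of norm
  \<open>lam\<close> supported on the first \<open>4k\<close> coordinates. The icube supplies \<open>n\<close> orthogonal vectors
  of norm \<open>lam\<close>, so by Witt's theorem (realised by reflections) the \<open>4k\<close> block vectors extend
  to \<open>n\<close> such vectors. Any further vector lives on the last two coordinates, so \<open>lam\<close> is a
  sum of two rational squares, hence of two integer squares by Davenport--Cassels.\<close>

lemma davenport_cassels_identity:
  fixes X Y a b d N :: int
  assumes "X^2 + Y^2 = N * d^2"
  shows "((a^2+b^2-N)*X + 2*(d*N - a*X - b*Y)*a)^2 + ((a^2+b^2-N)*Y + 2*(d*N - a*X - b*Y)*b)^2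
         = N * (d*(N+a^2+b^2) - 2*(a*X+b*Y))^2"
  using assms by algebra

lemma exists_nearest_multiple:
  fixes X d :: int
  assumes "d > 0"
  obtains a where "\<bar>2*(X - a*d)\<bar> \<le> d"
proof -
  define a where "a = (2*X + d) div (2*d)"
  have "0 \<le> (2*X + d) mod (2*d)" "(2*X + d) mod (2*d) < 2*d"
    using assms by simp_all
  moreover have "2*X + d = 2*d*a + (2*X + d) mod (2*d)"
    unfolding a_def by simp
  ultimately have "\<bar>2*(X - a*d)\<bar> \<le> d" by (simp add: algebra_simps abs_le_iff)
  then show thesis by (rule that)
qed

text \<open>Davenport--Cassels descent: the line through the rational point \<open>(X/d, Y/d)\<close> of the
  circle \<open>x\<^sup>2 + y\<^sup>2 = N\<close> and the nearest lattice point \<open>(a, b)\<close> meets the circle again in a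
  point of denominator \<open>d' = ((X - a d)\<^sup>2 + (Y - b d)\<^sup>2) / d \<le> d / 2\<close>.\<close>

lemma sum_two_squares_of_scaled:
  fixes N d X Y :: int
  assumes "d > 0" and "X^2 + Y^2 = N * d^2"
  shows "\<exists>a b. N = a^2 + b^2"
  using assms
proof (induction "nat d" arbitrary: d X Y rule: less_induct)
  case less
  show ?case
  proof (cases "d dvd X \<and> d dvd Y")
    case True
    then obtain a b where "X = d*a" "Y = d*b" by (auto elim!: dvdE)
    then have "d^2 * (a^2 + b^2) = d^2 * N"
      using less.prems(2) by (simp add: power_mult_distrib algebra_simps)
    then show ?thesis using less.prems(1) by auto
  next
    case False
    obtain a where a: "\<bar>2*(X - a*d)\<bar> \<le> d" using exists_nearest_multiple less.prems(1) .
    obtain b where b: "\<bar>2*(Y - b*d)\<bar> \<le> d" using exists_nearest_multiple less.prems(1) .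
    define r where "r = X - a*d"
    define s where "s = Y - b*d"
    define d' where "d' = d*(N+a^2+b^2) - 2*(a*X+b*Y)"
    have dd': "d * d' = r^2 + s^2"
      unfolding d'_def r_def s_def using less.prems(2) by (simp add: power2_eq_square algebra_simps)
    have "r \<noteq> 0 \<or> s \<noteq> 0" using False unfolding r_def s_def by auto
    then have pos: "r^2 + s^2 > 0" by (simp add: sum_power2_gt_zero_iff)
    have "(2*r)^2 \<le> d^2" "(2*s)^2 \<le> d^2"
      using a b less.prems(1) abs_le_square_iff[of "2*r" d] abs_le_square_iff[of "2*s" d]
      unfolding r_def s_def by auto
    then have "d * d' < d * d" using pos unfolding dd' by (simp add: power2_eq_square)
    then have "d' < d" using less.prems(1) by simp
    moreover have "d' > 0" using dd' pos less.prems(1) by (metis zero_less_mult_pos)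
    moreover have "((a^2+b^2-N)*X + 2*(d*N - a*X - b*Y)*a)^2 + ((a^2+b^2-N)*Y + 2*(d*N - a*X - b*Y)*b)^2
        = N * d'^2"
      unfolding d'_def by (rule davenport_cassels_identity[OF less.prems(2)])
    ultimately show ?thesis using less.hyps[of d'] by auto
  qed
qed

lemma sum_two_squares_of_rat:
  fixes N :: int and x y :: rat
  assumes "of_int N = x^2 + y^2"
  shows "\<exists>a b. N = a^2 + b^2"
proof -
  obtain p q p' q' where x: "quotient_of x = (p, q)" and y: "quotient_of y = (p', q')"
    by fastforce
  have q: "q > 0" "q' > 0" using quotient_of_denom_pos x y by auto
  have x_eq: "x = of_int p / of_int q" and y_eq: "y = of_int p' / of_int q'"
    using quotient_of_div x y by auto
  have "of_int ((p*q')^2 + (p'*q)^2) = (of_int (N * (q*q')^2) :: rat)"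
    using assms q unfolding x_eq y_eq by (simp add: field_simps power_mult_distrib)
  then have "(p*q')^2 + (p'*q)^2 = N * (q*q')^2" using of_int_eq_iff by blast
  then show ?thesis using sum_two_squares_of_scaled[of "q*q'"] q by auto
qed

definition sum_four_squares :: "'a::comm_ring_1 \<Rightarrow> bool" where
  "sum_four_squares x \<longleftrightarrow> (\<exists>a b c d. x = a^2 + b^2 + c^2 + d^2)"

lemma sum_four_squares_mult:
  assumes "sum_four_squares x" and "sum_four_squares y"
  shows "sum_four_squares (x * y)"
proof -
  obtain x1 x2 x3 x4 y1 y2 y3 y4
    where "x = x1^2 + x2^2 + x3^2 + x4^2" "y = y1^2 + y2^2 + y3^2 + y4^2"
    using assms unfolding sum_four_squares_def by blast
  then have "x * y = (x1*y1 - x2*y2 - x3*y3 - x4*y4)^2 + (x1*y2 + x2*y1 + x3*y4 - x4*y3)^2 +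
     (x1*y3 - x2*y4 + x3*y1 + x4*y2)^2 + (x1*y4 + x2*y3 - x3*y2 + x4*y1)^2"
    by (simp add: power2_eq_square algebra_simps)
  then show ?thesis unfolding sum_four_squares_def by blast
qed

lemma sum_four_squares_divide_square:
  fixes x m :: "'a::field"
  assumes "sum_four_squares x"
  shows "sum_four_squares (x / m^2)"
proof -
  obtain x1 x2 x3 x4 where "x = x1^2 + x2^2 + x3^2 + x4^2"
    using assms unfolding sum_four_squares_def by blast
  then have "x / m^2 = (x1/m)^2 + (x2/m)^2 + (x3/m)^2 + (x4/m)^2"
    by (simp add: power_divide add_divide_distrib)
  then show ?thesis unfolding sum_four_squares_def by blast
qed

lemma square_mod_prime_inj_on:
  fixes p h :: nat
  assumes "prime p" and "p = 2*h + 1"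
  shows "inj_on (\<lambda>x. (int x)^2 mod int p) {..h}"
proof (rule inj_onI)
  fix x y assume "x \<in> {..h}" "y \<in> {..h}" and "(int x)^2 mod int p = (int y)^2 mod int p"
  then have "int p dvd (int x - int y) * (int x + int y)"
    by (simp add: mod_eq_dvd_iff power2_eq_square algebra_simps)
  moreover have "prime (int p)" using assms(1) by simp
  ultimately have "int p dvd int x - int y \<or> int p dvd int x + int y"
    by (simp add: prime_dvd_mult_iff)
  moreover have "\<bar>int x - int y\<bar> < int p" "\<bar>int x + int y\<bar> < int p"
    using \<open>x \<in> {..h}\<close> \<open>y \<in> {..h}\<close> assms(2) by auto
  moreover have "z = 0" if "int p dvd z" "\<bar>z\<bar> < int p" for z
    using that dvd_imp_le_int[of z "int p"] by linarith
  ultimately show "x = y" by fastforce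
qed

lemma prime_dvd_sum_two_squares_plus_one:
  fixes p h :: nat
  assumes "prime p" and "p = 2*h + 1"
  obtains x y where "x \<le> h" "y \<le> h" "p dvd x^2 + y^2 + 1"
proof -
  define S where "S = (\<lambda>x. (int x)^2 mod int p) ` {..h}"
  define T where "T = (\<lambda>y. (-1 - (int y)^2) mod int p) ` {..h}"
  have "inj_on (\<lambda>y. (-1 - (int y)^2) mod int p) {..h}"
  proof (rule inj_onI)
    fix y y' assume "y \<in> {..h}" "y' \<in> {..h}"
      and "(-1 - (int y)^2) mod int p = (-1 - (int y')^2) mod int p"
    then have "(int y)^2 mod int p = (int y')^2 mod int p"
      by (simp add: mod_eq_dvd_iff dvd_diff_commute)
    then show "y = y'"
      using square_mod_prime_inj_on[OF assms] \<open>y \<in> {..h}\<close> \<open>y' \<in> {..h}\<close> by (auto dest: inj_onD)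
  qed
  then have "card T = h + 1" unfolding T_def by (simp add: card_image)
  moreover have "card S = h + 1"
    unfolding S_def using square_mod_prime_inj_on[OF assms] by (simp add: card_image)
  moreover have "S \<union> T \<subseteq> {0..<int p}" unfolding S_def T_def using assms(2) by auto
  then have "card (S \<union> T) \<le> p" using card_mono[of "{0..<int p}" "S \<union> T"] by simp
  moreover have "card S + card T = card (S \<union> T) + card (S \<inter> T)"
    by (rule card_Un_Int) (simp_all add: S_def T_def)
  ultimately have "S \<inter> T \<noteq> {}" using assms(2) by auto
  then obtain x y where "x \<le> h" "y \<le> h" "(int x)^2 mod int p = (-1 - (int y)^2) mod int p"
    unfolding S_def T_def by auto
  moreover from this(3) have "int p dvd int (x^2 + y^2 + 1)"
    by (simp add: mod_eq_dvd_iff algebra_simps)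
  ultimately show thesis using that int_dvd_int_iff by blast
qed

text \<open>Lagrange's four-square theorem over a field, where Euler's descent step is simply a
  division: from \<open>n m = x\<^sup>2 + y\<^sup>2 + 1\<close> with \<open>0 < m < n\<close> we get \<open>n = (n m) m / m\<^sup>2\<close>.\<close>

lemma sum_four_squares_of_nat: "sum_four_squares (of_nat n :: 'a::field_char_0)"
proof (induction n rule: less_induct)
  case (less n)
  consider "n \<le> 1" | "n = 2" | "n > 1" "\<not> prime n" | "prime n" "odd n"
    using prime_odd_nat prime_gt_1_nat by force
  then show ?case
  proof cases
    case 1
    then have "(of_nat n :: 'a) = of_nat n^2 + 0^2 + 0^2 + 0^2" by (cases n) auto
    then show ?thesis unfolding sum_four_squares_def by blast
  next
    case 2
    then have "(of_nat n :: 'a) = 1^2 + 1^2 + 0^2 + 0^2" by simp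
    then show ?thesis unfolding sum_four_squares_def by blast
  next
    case 3
    then obtain m q where "n = m * q" "m \<noteq> 1" "m \<noteq> n"
      unfolding prime_nat_iff by (auto elim!: dvdE)
    moreover from this have "1 < m" "1 < q" using 3(1) by (auto simp: nat_neq_iff)
    ultimately have "m < n" "q < n" "of_nat n = (of_nat m * of_nat q :: 'a)"
      using n_less_m_mult_n n_less_n_mult_m by auto
    then show ?thesis using less.IH sum_four_squares_mult by metis
  next
    case 4
    then obtain h where h: "n = 2*h + 1" using oddE by blast
    obtain x y where "x \<le> h" "y \<le> h" "n dvd x^2 + y^2 + 1"
      using prime_dvd_sum_two_squares_plus_one[OF 4(1) h] .
    then obtain m where m: "x^2 + y^2 + 1 = n * m" by (auto elim: dvdE)
    have "x^2 \<le> h^2" "y^2 \<le> h^2" using \<open>x \<le> h\<close> \<open>y \<le> h\<close> by (simp_all add: power_mono)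
    then have "n * m \<le> 2*h^2 + 1" using m by linarith
    also have "\<dots> < n * n" using h prime_gt_1_nat[OF 4(1)] by (simp add: power2_eq_square algebra_simps)
    finally have "m < n" by simp
    have "m > 0" using m by (auto intro: gr0I)
    have "sum_four_squares (of_nat (n * m) :: 'a)"
      unfolding sum_four_squares_def
      by (rule exI[of _ "of_nat x"], rule exI[of _ "of_nat y"], rule exI[of _ 1], rule exI[of _ 0])
        (simp flip: m)
    then have "sum_four_squares (of_nat (n * m) * of_nat m / of_nat m^2 :: 'a)"
      using sum_four_squares_mult sum_four_squares_divide_square less.IH[OF \<open>m < n\<close>] by blast
    moreover have "of_nat (n * m) * of_nat m / of_nat m^2 = (of_nat n :: 'a)"
      using \<open>m > 0\<close> by (simp add: power2_eq_square)
    ultimately show ?thesis by simp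
  qed
qed

definition dot :: "nat \<Rightarrow> (nat \<Rightarrow> 'a::comm_ring) \<Rightarrow> (nat \<Rightarrow> 'a) \<Rightarrow> 'a" where
  "dot n x y = (\<Sum>i<n. x i * y i)"

definition orth_family :: "nat \<Rightarrow> 'a::comm_ring \<Rightarrow> nat \<Rightarrow> (nat \<Rightarrow> nat \<Rightarrow> 'a) \<Rightarrow> bool" where
  "orth_family n lam m Y \<longleftrightarrow> (\<forall>i<m. \<forall>j<m. dot n (Y i) (Y j) = (if i = j then lam else 0))"

lemma dot_commute: "dot n x y = dot n y x"
  unfolding dot_def by (simp add: mult.commute)

lemma dot_cong:
  "(\<And>i. i < n \<Longrightarrow> x i = x' i) \<Longrightarrow> (\<And>i. i < n \<Longrightarrow> y i = y' i) \<Longrightarrow> dot n x y = dot n x' y'"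
  unfolding dot_def by (intro sum.cong) auto

lemma dot_diff_scaled_left: "dot n (\<lambda>i. x i - c * h i) y = dot n x y - c * dot n h y"
  unfolding dot_def by (simp add: left_diff_distrib sum_subtractf sum_distrib_left mult.assoc)

lemma dot_diff_scaled_right: "dot n y (\<lambda>i. x i - c * h i) = dot n y x - c * dot n y h"
  using dot_diff_scaled_left dot_commute by metis

lemma dot_diff_left: "dot n (\<lambda>i. x i - h i) (y :: nat \<Rightarrow> 'a::comm_ring_1) = dot n x y - dot n h y"
  using dot_diff_scaled_left[of n x 1 h y] by simp

lemma dot_diff_right: "dot n y (\<lambda>i. x i - h i :: 'a::comm_ring_1) = dot n y x - dot n y h"
  using dot_diff_scaled_right[of n y x 1 h] by simp

lemma dot_self_eq_0D:
  fixes h :: "nat \<Rightarrow> 'a::linordered_idom"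
  assumes "dot n h h = 0" and "i < n"
  shows "h i = 0"
  using assms sum_nonneg_eq_0_iff[of "{..<n}" "\<lambda>i. h i * h i"] unfolding dot_def by auto

definition reflect :: "nat \<Rightarrow> (nat \<Rightarrow> 'a::field) \<Rightarrow> (nat \<Rightarrow> 'a) \<Rightarrow> nat \<Rightarrow> 'a" where
  "reflect n h x = (\<lambda>i. x i - (2 * dot n x h / dot n h h) * h i)"

lemma dot_reflect: "dot n (reflect n h x) (reflect n h y) = dot n x y"
proof (cases "dot n h h = 0")
  case True
  then show ?thesis unfolding reflect_def by simp
next
  case False
  define c where "c = 2 * dot n x h / dot n h h"
  define c' where "c' = 2 * dot n y h / dot n h h"
  have "dot n (reflect n h x) (reflect n h y)
      = dot n x y - c' * dot n x h - c * dot n h y + c * c' * dot n h h"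
    unfolding reflect_def c_def[symmetric] c'_def[symmetric]
      dot_diff_scaled_left dot_diff_scaled_right
    by (simp add: algebra_simps)
  also have "\<dots> = dot n x y"
    unfolding c_def c'_def using False dot_commute[of n h y] by (simp add: field_simps)
  finally show ?thesis .
qed

lemma reflect_orthogonal: "dot n x h = 0 \<Longrightarrow> reflect n h x = x"
  unfolding reflect_def by simp

lemma reflect_swap:
  fixes a b :: "nat \<Rightarrow> 'a::field"
  assumes "dot n a a = dot n b b" and "dot n h h \<noteq> 0" and "h = (\<lambda>i. a i - b i)"
  shows "reflect n h a = b"
proof -
  have "dot n h h = 2 * dot n a h"
    using assms(1) unfolding assms(3) dot_diff_left dot_diff_right
    by (simp add: dot_commute[of n a b])
  then show ?thesis
    using assms(2) unfolding reflect_def by (simp add: assms(3))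
qed

text \<open>Witt's extension theorem for the form \<open>lam \<cdot> I\<^sub>n\<close>: reflections in the differences
  \<open>Y\<^sub>m - U\<^sub>m\<close> move a full orthogonal family onto a prescribed partial one, one vector at a time.\<close>

lemma orth_family_extend:
  fixes Y U :: "nat \<Rightarrow> nat \<Rightarrow> 'a::linordered_field"
  assumes "orth_family n lam n Y" and "orth_family n lam m U" and "m \<le> n"
  shows "\<exists>Z. orth_family n lam n Z \<and> (\<forall>j<m. \<forall>i<n. Z j i = U j i)"
  using assms(2,3)
proof (induction m)
  case 0
  then show ?case using assms(1) by blast
next
  case (Suc m)
  have U: "orth_family n lam m U" using Suc.prems(1) unfolding orth_family_def by simp
  obtain W where W: "orth_family n lam n W" "\<forall>j<m. \<forall>i<n. W j i = U j i"
    using Suc.IH[OF U] Suc.prems(2) by auto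
  have "m < n" using Suc.prems(2) by simp
  define h where "h = (\<lambda>i. W m i - U m i)"
  show ?case
  proof (cases "dot n h h = 0")
    case True
    then have "\<forall>i<n. W m i = U m i" using dot_self_eq_0D unfolding h_def by fastforce
    then show ?thesis using W less_Suc_eq by metis
  next
    case False
    define Z where "Z = (\<lambda>j. reflect n h (W j))"
    have "orth_family n lam n Z" using W(1) unfolding orth_family_def Z_def dot_reflect .
    moreover have "Z m = U m"
      using W(1) Suc.prems(1) \<open>m < n\<close> False unfolding Z_def orth_family_def
      by (intro reflect_swap h_def) auto
    moreover have "Z j = W j" if "j < m" for j
    proof -
      have "dot n (W j) (U m) = dot n (U j) (U m)" using W(2) that by (intro dot_cong) auto
      then have "dot n (W j) h = 0"
        using W(1) Suc.prems(1) that \<open>m < n\<close> unfolding h_def dot_diff_right orth_family_def by auto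
      then show ?thesis unfolding Z_def by (rule reflect_orthogonal)
    qed
    ultimately show ?thesis using W(2) less_Suc_eq by metis
  qed
qed

text \<open>Row \<open>s\<close> is \<open>e\<^sub>s q\<close> for the basis \<open>e = (1, i, j, k)\<close> of the quaternions and
  \<open>q = a + bi + cj + dk\<close>; right multiplication by \<open>q\<close> scales the norm by \<open>|q|\<^sup>2\<close>.\<close>

definition quat_matrix :: "'a::comm_ring_1 \<Rightarrow> 'a \<Rightarrow> 'a \<Rightarrow> 'a \<Rightarrow> nat \<Rightarrow> nat \<Rightarrow> 'a" where
  "quat_matrix a b c d s r = [[a,b,c,d], [-b,a,-d,c], [-c,d,a,-b], [-d,-c,b,a]] ! s ! r"

definition quat_blocks :: "'a::comm_ring_1 \<Rightarrow> 'a \<Rightarrow> 'a \<Rightarrow> 'a \<Rightarrow> nat \<Rightarrow> nat \<Rightarrow> 'a" where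
  "quat_blocks a b c d j i =
     (if i div 4 = j div 4 then quat_matrix a b c d (j mod 4) (i mod 4) else 0)"

lemma quat_matrix_rows_orth:
  assumes "s < 4" and "s' < 4"
  shows "(\<Sum>r<4. quat_matrix a b c d s r * quat_matrix a b c d s' r)
    = (if s = s' then a^2 + b^2 + c^2 + d^2 else 0)"
  using assms unfolding quat_matrix_def
  by (auto simp: numeral_eq_Suc less_Suc_eq power2_eq_square algebra_simps)

lemma quat_matrix_columns_orth:
  assumes "r < 4" and "r' < 4"
  shows "(\<Sum>s<4. quat_matrix a b c d s r * quat_matrix a b c d s r')
    = (if r = r' then a^2 + b^2 + c^2 + d^2 else 0)"
  using assms unfolding quat_matrix_def
  by (auto simp: numeral_eq_Suc less_Suc_eq power2_eq_square algebra_simps)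

lemma sum_lessThan_eq_block:
  fixes f :: "nat \<Rightarrow> 'a::comm_monoid_add"
  assumes "4*t + 4 \<le> n" and "\<And>i. i < n \<Longrightarrow> i div 4 \<noteq> t \<Longrightarrow> f i = 0"
  shows "(\<Sum>i<n. f i) = (\<Sum>r<4. f (4*t + r))"
proof -
  have "(\<Sum>i<n. f i) = (\<Sum>i\<in>{4*t..<4*t + 4}. f i)"
  proof (rule sum.mono_neutral_right)
    have "i \<in> {4*t..<4*t + 4}" if "i div 4 = t" for i
      using that by auto
    then show "\<forall>i\<in>{..<n} - {4*t..<4*t + 4}. f i = 0"
      using assms(2) by blast
  qed (use assms(1) in auto)
  also have "\<dots> = (\<Sum>r<4. f (4*t + r))"
    using sum.shift_bounds_nat_ivl[of f 0 "4*t" 4] by (simp add: lessThan_atLeast0 add.commute)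
  finally show ?thesis .
qed

lemma dot_quat_blocks:
  assumes "4*t + 4 \<le> n" and "s < 4"
  shows "dot n x (quat_blocks a b c d (4*t + s)) = (\<Sum>r<4. x (4*t + r) * quat_matrix a b c d s r)"
  unfolding dot_def using assms
  by (subst sum_lessThan_eq_block[OF assms(1)]) (auto simp: quat_blocks_def intro!: sum.cong)

lemma orth_family_quat_blocks:
  assumes "4*k \<le> n"
  shows "orth_family n (a^2 + b^2 + c^2 + d^2) (4*k) (quat_blocks a b c d)"
  unfolding orth_family_def
proof (intro allI impI)
  fix j j' assume "j < 4*k" "j' < 4*k"
  show "dot n (quat_blocks a b c d j) (quat_blocks a b c d j')
    = (if j = j' then a^2 + b^2 + c^2 + d^2 else 0)"
  proof (cases "j div 4 = j' div 4")
    case False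
    then show ?thesis unfolding dot_def quat_blocks_def by (auto intro!: sum.neutral)
  next
    case True
    define t where "t = j div 4"
    define s where "s = j mod 4"
    define s' where "s' = j' mod 4"
    have j: "j = 4*t + s" "j' = 4*t + s'" and "s < 4" "s' < 4"
      unfolding t_def s_def s'_def by (simp, simp add: True, simp, simp)
    have "4*t + 4 \<le> 4*k" using \<open>j < 4*k\<close> unfolding t_def by presburger
    then have "4*t + 4 \<le> n" using assms by linarith
    then have "dot n (quat_blocks a b c d j) (quat_blocks a b c d j')
      = (\<Sum>r<4. quat_matrix a b c d s r * quat_matrix a b c d s' r)"
      unfolding j using \<open>s < 4\<close> \<open>s' < 4\<close>
      by (subst dot_quat_blocks) (auto simp: quat_blocks_def intro!: sum.cong)
    also have "\<dots> = (if j = j' then a^2 + b^2 + c^2 + d^2 else 0)"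
      using j \<open>s < 4\<close> \<open>s' < 4\<close> by (subst quat_matrix_rows_orth) auto
    finally show ?thesis .
  qed
qed

text \<open>For the quaternion matrix \<open>Q\<close> also \<open>Q\<^sup>T Q = lam I\<close>, so \<open>Q x = 0\<close> on a block forces
  \<open>lam x = 0\<close> there.\<close>

lemma orthogonal_quat_blocks_vanish:
  fixes x :: "nat \<Rightarrow> 'a::idom"
  assumes "4*k \<le> n" and "a^2 + b^2 + c^2 + d^2 \<noteq> 0"
    and "\<And>j. j < 4*k \<Longrightarrow> dot n x (quat_blocks a b c d j) = 0" and "i < 4*k"
  shows "x i = 0"
proof -
  define t where "t = i div 4"
  define r where "r = i mod 4"
  have i: "i = 4*t + r" and "r < 4" unfolding t_def r_def by simp_all
  have t: "4*t + 4 \<le> 4*k" using assms(4) unfolding t_def by presburger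
  then have "4*t + 4 \<le> n" using assms(1) by linarith
  have row: "(\<Sum>r'<4. x (4*t + r') * quat_matrix a b c d s r') = 0" if "s < 4" for s
  proof -
    have "4*t + s < 4*k" using t that by linarith
    then show ?thesis using assms(3) dot_quat_blocks[OF \<open>4*t + 4 \<le> n\<close> that] by metis
  qed
  have "0 = (\<Sum>s<4. quat_matrix a b c d s r * (\<Sum>r'<4. x (4*t + r') * quat_matrix a b c d s r'))"
    using row by simp
  also have "\<dots> = (\<Sum>r'<4. x (4*t + r') * (\<Sum>s<4. quat_matrix a b c d s r * quat_matrix a b c d s r'))"
    unfolding sum_distrib_left by (subst sum.swap) (simp add: mult_ac)
  also have "\<dots> = (\<Sum>r'<4. if r = r' then x (4*t + r') * (a^2 + b^2 + c^2 + d^2) else 0)"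
    using \<open>r < 4\<close> by (intro sum.cong) (simp_all add: quat_matrix_columns_orth)
  also have "\<dots> = x i * (a^2 + b^2 + c^2 + d^2)"
    unfolding i using \<open>r < 4\<close> by simp
  finally show ?thesis using assms(2) by simp
qed

lemma orth_family_of_icube:
  assumes "is_icube n n lam V"
  shows "orth_family n (of_int lam :: 'a::comm_ring_1) n (\<lambda>j i. of_int (V j i))"
proof -
  have "dot n (\<lambda>i. of_int (V p i)) (\<lambda>i. of_int (V q i)) = (of_int (ip n (V p) (V q)) :: 'a)" for p q
    unfolding dot_def ip_def by simp
  then show ?thesis using assms unfolding is_icube_def orth_family_def by simp
qed

lemma sum_two_squares_of_orth_family:
  fixes lam :: "'a::linordered_field"
  assumes "orth_family n lam n Y" and "n = 4*k + 2"
    and "lam = a^2 + b^2 + c^2 + d^2" and "lam \<noteq> 0"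
  shows "\<exists>x y. lam = x^2 + y^2"
proof -
  have "4*k \<le> n" using assms(2) by simp
  obtain Z where Z: "orth_family n lam n Z" "\<forall>j<4*k. \<forall>i<n. Z j i = quat_blocks a b c d j i"
    using orth_family_extend[OF assms(1) _ \<open>4*k \<le> n\<close>] orth_family_quat_blocks[OF \<open>4*k \<le> n\<close>]
    unfolding assms(3) by blast
  define z where "z = Z (4*k)"
  have "dot n z (quat_blocks a b c d j) = 0" if "j < 4*k" for j
  proof -
    have "dot n z (quat_blocks a b c d j) = dot n z (Z j)" using Z(2) that by (intro dot_cong) auto
    also have "\<dots> = 0" using Z(1) that assms(2) unfolding orth_family_def z_def by auto
    finally show ?thesis .
  qed
  then have "z i = 0" if "i < 4*k" for i
    using orthogonal_quat_blocks_vanish[OF \<open>4*k \<le> n\<close>] assms(3,4) that by metis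
  then have "dot n z z = z (4*k)^2 + z (4*k + 1)^2"
    unfolding dot_def assms(2) by (simp add: power2_eq_square)
  moreover have "dot n z z = lam" using Z(1) assms(2) unfolding orth_family_def z_def by simp
  ultimately show ?thesis by metis
qed

theorem mainTheorem1:
  fixes k n :: nat and v :: "nat \<Rightarrow> int"
  assumes "n = 4 * k + 2"
    and "in_icube n v"
  shows "\<exists>a b :: int. ip n v v = a^2 + b^2"
proof -
  obtain lam V j where icube: "is_icube n n lam V" and "j < n" and v: "\<forall>i<n. V j i = v i"
    using assms(2) unfolding in_icube_def by blast
  then have "ip n v v = lam" and "lam > 0"
    unfolding is_icube_def ip_def by (auto simp flip: v intro: sum.cong)
  then obtain a b c d :: rat where "of_int lam = a^2 + b^2 + c^2 + d^2"
    using sum_four_squares_of_nat[of "nat lam"] unfolding sum_four_squares_def by auto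
  then obtain x y :: rat where "of_int lam = x^2 + y^2"
    using sum_two_squares_of_orth_family[OF orth_family_of_icube[OF icube] assms(1)] \<open>lam > 0\<close>
    by fastforce
  then show ?thesis using sum_two_squares_of_rat \<open>ip n v v = lam\<close> by blast
qed

end
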